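(* (1) For every positive divisor $\delta$ of $\lambda(2)$, $\displaystyle\sum_{\substack{a\in U_2\\ \mathrm{ind}_2(a)=\delta}}a\equiv 1\pmod 2$. (2) For every positive divisor $\delta$ of $\lambda(4)$, $\displaystyle\sum_{\substack{a\in U_4\\ \mathrm{ind}_4(a)=\delta}}a\equiv (-1)^{\delta+1}\pmod 4$. (3) For every positive divisor $\delta$ of $\lambda(8)$, $\displaystyle\sum_{\substack{a\in U_8\\ \mathrm{ind}_8(a)=\delta}}a\equiv (-1)^{\delta+1}\pmod 8$. (4) Let $\alpha>3$ and $\delta=2^{\beta}$ with $1<\beta\le\alpha-2$. Then $\displaystyle\sum_{\substack{a\in U_{2^\alpha}\\ \mathrm{ind}_{2^\alpha}(a)=\delta}}a\equiv 0\pmod{2^\alpha}$. (5) Let $p$ be an odd prime, $\alpha$ a positive integer, and $\delta$ a positive divisor of $\lambda(p^\alpha)=\phi(p^\alpha)$. Then $$\sum_{\substack{a\in U_{p^\alpha}\\ \mathrm{ind}_{p^\alpha}(a)=\delta}}a\equiv \mu\big((\delta,p-1)\big)\,\phi\big(p^{\mathrm{ord}_p(\delta)}\big)\pmod{p^\alpha}.$$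
   Context: $U_m$ denotes the set of invertible residue classes in $\mathbb{Z}/m\mathbb{Z}$ (sums run over one representative of each such class). For $a$ coprime to $m$, $\mathrm{ind}_m(a)$ is the multiplicative order of $a$ modulo $m$. $\lambda(m)$ is the Carmichael function: the smallest $k>0$ such that $a^k\equiv 1\pmod m$ for all $a\in U_m$. $\mu$ is the Möbius function, $\phi$ Euler's totient function, $(x,y)$ the greatest common divisor, and $\mathrm{ord}_p(n)=\max\{k: p^k\mid n\}$. *)

theory Defs
  imports "HOL-Number_Theory.Number_Theory" "HOL-Computational_Algebra.Squarefree"
begin

definition moebius_mu :: "nat \<Rightarrow> int" where
  "moebius_mu n = (if n > 0 \<and> squarefree n then (-1) ^ card (prime_factors n) else 0)"

text \<open>Sum of the residues in U_m (representatives 1..m coprime to m) of multiplicative order d.\<close>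
definition ind_sum :: "nat \<Rightarrow> nat \<Rightarrow> int" where
  "ind_sum m d = (\<Sum>a\<in>{a\<in>totatives m. ord m a = d}. int a)"

end

theory Submission
  imports Defs
begin

(* If 4 divides d, then a and m - a have the same order d, because (-1)^(d/2) = 1; the
   involution a -> m - a has no fixed point among the elements of order d, so they fall into
   pairs with sum m and their sum vanishes modulo m.  The moduli 2, 4 and 8 are finite
   computations.

   For m = p^alpha with p an odd prime, let S(n) be the sum of the n-th roots of unity in U_m;
   grouping them by order gives S(n) = sum_{d | n} ind_sum m d.  Since U_m is cyclic, its
   p^j-th roots of unity are exactly the residues 1 + t p^(alpha - j) with t < p^j, and as p^j
   is odd their sum is p^j modulo m.  If n is not a power of p, some prime q <> p divides n;
   the element h of order q is not 1 modulo p, so h - 1 is a unit and h S(n) = S(n) forces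
   S(n) = 0 modulo m.  The right-hand side f(d) = mu((d, p - 1)) phi(p^ord_p(d)) has the same
   divisor sums, so induction over the divisors of phi(m), i.e. Moebius inversion, gives
   ind_sum m d = f(d) modulo m. *)

lemma ind_sum_2_1: "ind_sum 2 1 = 1"
  by code_simp

lemma ind_sum_4_1: "ind_sum 4 1 = 1"
  by code_simp

lemma ind_sum_4_2: "ind_sum 4 2 = 3"
  by code_simp

lemma ind_sum_8_1: "ind_sum 8 1 = 1"
  by code_simp

lemma ind_sum_8_2: "ind_sum 8 2 = 15"
  by code_simp

section \<open>Elements whose order is divisible by four\<close>

lemma minus_pow_even_cong:
  fixes m a k :: nat
  assumes "a \<le> m" and "even k"
  shows "[(m - a) ^ k = a ^ k] (mod m)"
proof -
  have "[int (m - a) = - int a] (mod int m)"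
    using assms(1) by (simp add: of_nat_diff cong_iff_dvd_diff)
  then have "[int (m - a) ^ k = (- int a) ^ k] (mod int m)"
    by (rule cong_pow)
  then have "[int ((m - a) ^ k) = int (a ^ k)] (mod int m)"
    using assms(2) by simp
  then show ?thesis
    by (simp only: cong_int_iff)
qed

lemma ord_minus_eq:
  fixes m a :: nat
  assumes "a \<le> m" and four_dvd: "4 dvd ord m a"
  shows "ord m (m - a) = ord m a"
proof -
  define d e where "d = ord m a" and "e = ord m (m - a)"
  have pow_cong: "[(m - a) ^ k = a ^ k] (mod m)" if "even k" for k
    using assms(1) that by (rule minus_pow_even_cong)
  have "even d"
    using dvd_trans[of 2 4 d] four_dvd by (simp add: d_def)
  then have "[(m - a) ^ d = 1] (mod m)"
    using cong_trans[OF pow_cong ord[of a m]] by (simp add: d_def)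
  then have "e dvd d"
    by (simp only: e_def ord_divides)
  have "[a ^ (2 * e) = (m - a) ^ (2 * e)] (mod m)"
    by (rule cong_sym, rule pow_cong) simp
  also have "(m - a) ^ (2 * e) = ((m - a) ^ e) ^ 2"
    by (simp add: power_mult mult.commute)
  also have "[\<dots> = 1 ^ 2] (mod m)"
    using ord[of "m - a" m] by (intro cong_pow) (simp add: e_def)
  finally have "[a ^ (2 * e) = 1] (mod m)"
    by simp
  then have "d dvd 2 * e"
    by (simp only: d_def ord_divides)
  with four_dvd have "4 dvd 2 * e"
    unfolding d_def by (rule dvd_trans)
  then have "even e"
    by presburger
  then have "[a ^ e = 1] (mod m)"
    using cong_trans[OF cong_sym[OF pow_cong] ord[of "m - a" m]] by (simp add: e_def)
  then have "d dvd e"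
    by (simp only: d_def ord_divides)
  with \<open>e dvd d\<close> show ?thesis
    by (simp add: d_def e_def dvd_antisym)
qed

lemma dvd_sum_of_paired_elements:
  fixes m :: nat and A :: "nat set"
  assumes "finite A" and paired: "\<And>a. a \<in> A \<Longrightarrow> a < m \<and> 2 * a \<noteq> m \<and> m - a \<in> A"
  shows "m dvd (\<Sum>a\<in>A. a)"
proof -
  define L where "L = {a \<in> A. 2 * a < m}"
  have A_split: "A = L \<union> (\<lambda>a. m - a) ` L"
  proof (intro equalityI subsetI)
    fix a assume "a \<in> A"
    with paired[of a] have "a \<in> L \<or> (m - a \<in> L \<and> a = m - (m - a))"
      by (auto simp: L_def)
    then show "a \<in> L \<union> (\<lambda>a. m - a) ` L"
      by blast
  qed (use paired in \<open>auto simp: L_def\<close>)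
  have "L \<inter> (\<lambda>a. m - a) ` L = {}" and "inj_on (\<lambda>a. m - a) L"
    by (auto simp: L_def inj_on_def)
  moreover have "finite L"
    using assms(1) by (simp add: L_def)
  ultimately have "(\<Sum>a\<in>A. a) = (\<Sum>a\<in>L. a) + (\<Sum>a\<in>L. m - a)"
    unfolding A_split by (simp add: sum.union_disjoint sum.reindex)
  also have "\<dots> = (\<Sum>a\<in>L. a + (m - a))"
    by (simp add: sum.distrib)
  also have "\<dots> = (\<Sum>a\<in>L. m)"
    by (intro sum.cong) (auto simp: L_def dest: paired)
  also have "\<dots> = card L * m"
    by simp
  finally show ?thesis
    by simp
qed

lemma ind_sum_cong_0_if_4_dvd:
  assumes "4 dvd d"
  shows "[ind_sum m d = 0] (mod int m)"
proof -
  let ?A = "{a \<in> totatives m. ord m a = d}"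
  have "a < m \<and> 2 * a \<noteq> m \<and> m - a \<in> ?A" if "a \<in> ?A" for a
  proof -
    from that have a: "0 < a" "a \<le> m" "coprime a m" "ord m a = d"
      by (auto simp: in_totatives_iff)
    have "a \<noteq> 1"
      using a(4) assms by auto
    with a(2,3) have "a < m"
      by (auto simp: le_less)
    moreover from a(3) \<open>a \<noteq> 1\<close> have "2 * a \<noteq> m"
      by auto
    moreover have "m - a \<in> totatives m"
    proof -
      have "gcd (m - a) m = gcd a m"
        using \<open>a < m\<close> by (simp add: gcd_diff2_nat)
      with a(3) have "coprime (m - a) m"
        by (simp only: coprime_iff_gcd_eq_1)
      with \<open>a < m\<close> show ?thesis
        by (simp add: in_totatives_iff)
    qed
    ultimately show ?thesis
      using ord_minus_eq[of a m] a assms by simp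
  qed
  then have "m dvd (\<Sum>a\<in>?A. a)"
    by (intro dvd_sum_of_paired_elements) auto
  then show ?thesis
    by (simp add: ind_sum_def cong_0_iff flip: of_nat_sum)
qed

section \<open>Divisor sums\<close>

lemma sum_divisors_prime_power_mult:
  fixes p v e :: nat and F :: "nat \<Rightarrow> 'a::comm_monoid_add"
  assumes p: "prime p" and "\<not> p dvd e"
  shows "(\<Sum>d | d dvd p ^ v * e. F d) = (\<Sum>i\<le>v. \<Sum>d | d dvd e. F (p ^ i * d))"
proof -
  have "p > 0"
    using p by (simp add: prime_gt_0_nat)
  have multiplicity_eq: "multiplicity p (p ^ i * d) = i" if "d dvd e" for i d
    using p that assms(2) by (intro multiplicity_decomposeI[OF refl]) (auto dest: dvd_trans)
  have "bij_betw (\<lambda>(i, d). p ^ i * d) ({..v} \<times> {d. d dvd e}) {d. d dvd p ^ v * e}"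
  proof (rule bij_betwI')
    fix x y assume "x \<in> {..v} \<times> {d. d dvd e}" "y \<in> {..v} \<times> {d. d dvd e}"
    then obtain i d j d' where xy: "x = (i, d)" "y = (j, d')" "d dvd e" "d' dvd e"
      by auto
    have "i = j \<and> d = d'" if "p ^ i * d = p ^ j * d'"
      using that multiplicity_eq[OF xy(3), of i] multiplicity_eq[OF xy(4), of j] \<open>p > 0\<close> by simp
    then show "((\<lambda>(i, d). p ^ i * d) x = (\<lambda>(i, d). p ^ i * d) y) = (x = y)"
      using xy by auto
  next
    fix x assume "x \<in> {..v} \<times> {d. d dvd e}"
    then show "(\<lambda>(i, d). p ^ i * d) x \<in> {d. d dvd p ^ v * e}"
      by (auto intro!: mult_dvd_mono le_imp_power_dvd)
  next
    fix y assume "y \<in> {d. d dvd p ^ v * e}"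
    then obtain b c where "y = b * c" "b dvd p ^ v" "c dvd e"
      using division_decomp by blast
    moreover from \<open>b dvd p ^ v\<close> obtain i where "i \<le> v" "b = p ^ i"
      using p by (auto simp: divides_primepow_nat)
    ultimately show "\<exists>x\<in>{..v} \<times> {d. d dvd e}. y = (\<lambda>(i, d). p ^ i * d) x"
      by auto
  qed
  then have "(\<Sum>d | d dvd p ^ v * e. F d) = (\<Sum>(i, d)\<in>{..v} \<times> {d. d dvd e}. F (p ^ i * d))"
    by (simp add: sum.reindex_bij_betw[symmetric] case_prod_unfold)
  also have "\<dots> = (\<Sum>i\<le>v. \<Sum>d | d dvd e. F (p ^ i * d))"
    by (simp add: sum.cartesian_product)
  finally show ?thesis .
qed

lemma moebius_mu_prime_power_mult:
  fixes q d i :: nat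
  assumes q: "prime q" and "\<not> q dvd d"
  shows "moebius_mu (q ^ i * d) = (if i = 0 then moebius_mu d else if i = 1 then - moebius_mu d else 0)"
proof -
  have "d > 0"
    using assms(2) by (auto intro!: gr0I)
  consider "i = 0" | "i = 1" | "i \<ge> 2"
    by linarith
  then show ?thesis
  proof cases
    case 2
    have "coprime q d"
      using q assms(2) by (simp add: prime_imp_coprime)
    then have "squarefree (q * d) \<longleftrightarrow> squarefree d"
      using squarefree_mono[of d "q * d"] squarefree_mult_coprime squarefree_prime[OF q] by auto
    moreover have "card (prime_factors (q * d)) = Suc (card (prime_factors d))"
    proof -
      have "prime_factors (q * d) = insert q (prime_factors d)"
        using q \<open>d > 0\<close> by (simp add: prime_factors_product prime_prime_factors prime_gt_0_nat)
      moreover have "q \<notin> prime_factors d"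
        using assms(2) by auto
      ultimately show ?thesis
        by simp
    qed
    ultimately show ?thesis
      using 2 q \<open>d > 0\<close> by (simp add: moebius_mu_def prime_gt_0_nat)
  next
    case 3
    then have "q ^ 2 dvd q ^ i * d"
      by (simp add: le_imp_power_dvd)
    moreover have "\<not> is_unit q"
      using q not_prime_unit by blast
    ultimately have "\<not> squarefree (q ^ i * d)"
      using squarefreeD by blast
    then show ?thesis
      using 3 by (simp add: moebius_mu_def)
  qed simp
qed

lemma sum_moebius_mu_divisors:
  fixes n :: nat
  assumes "n > 0"
  shows "(\<Sum>d | d dvd n. moebius_mu d) = (if n = 1 then 1 else 0)"
proof (cases "n = 1")
  case False
  with assms obtain q where q: "prime q" "q dvd n"
    using prime_factor_nat by blast
  define v where "v = multiplicity q n"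
  obtain e where n: "n = q ^ v * e" and e: "\<not> q dvd e"
    using multiplicity_decompose'[of n q] assms q(1) unfolding v_def by (metis not_prime_unit neq0_conv)
  have "v \<ge> 1"
  proof (rule ccontr)
    assume "\<not> v \<ge> 1"
    with n have "n = e"
      by simp
    with e q(2) show False
      by simp
  qed
  have not_dvd: "\<not> q dvd d" if "d dvd e" for d
    using e that dvd_trans by blast
  have "(\<Sum>d | d dvd n. moebius_mu d) = (\<Sum>i\<le>v. \<Sum>d | d dvd e. moebius_mu (q ^ i * d))"
    unfolding n using q(1) e by (rule sum_divisors_prime_power_mult)
  also have "\<dots> = (\<Sum>i\<le>1. \<Sum>d | d dvd e. moebius_mu (q ^ i * d))"
  proof (rule sum.mono_neutral_right)
    show "\<forall>i\<in>{..v} - {..1}. (\<Sum>d | d dvd e. moebius_mu (q ^ i * d)) = 0"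
      by (intro ballI sum.neutral) (simp add: moebius_mu_prime_power_mult[OF q(1) not_dvd])
  qed (use \<open>v \<ge> 1\<close> in auto)
  also have "\<dots> = (\<Sum>d | d dvd e. moebius_mu d + moebius_mu (q * d))"
    by (simp add: sum.distrib)
  also have "\<dots> = 0"
  proof (intro sum.neutral ballI)
    fix d assume "d \<in> {d. d dvd e}"
    then show "moebius_mu d + moebius_mu (q * d) = 0"
      using moebius_mu_prime_power_mult[OF q(1) not_dvd, of d 1] by simp
  qed
  finally show ?thesis
    using False by simp
qed (simp add: moebius_mu_def)

lemma sum_totient_prime_powers:
  assumes "prime p"
  shows "(\<Sum>i\<le>v. totient (p ^ i)) = p ^ v"
  using sum_divisors_prime_power_mult[OF assms, of 1 totient v] totient_divisor_sum[of "p ^ v"]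
    prime_gt_1_nat[OF assms] by simp

lemma cong_of_divisor_sums_cong:
  fixes F G :: "nat \<Rightarrow> int" and N :: nat and M :: int
  assumes "N > 0"
    and sums: "\<And>n. n dvd N \<Longrightarrow> [(\<Sum>d | d dvd n. F d) = (\<Sum>d | d dvd n. G d)] (mod M)"
  shows "\<delta> dvd N \<Longrightarrow> [F \<delta> = G \<delta>] (mod M)"
proof (induction \<delta> rule: less_induct)
  case (less \<delta>)
  from assms(1) less.prems have "\<delta> > 0"
    by (rule dvd_pos_nat)
  define R where "R = {d. d dvd \<delta>} - {\<delta>}"
  have split: "(\<Sum>d | d dvd \<delta>. H d) = H \<delta> + (\<Sum>d\<in>R. H d)" for H :: "nat \<Rightarrow> int"
    unfolding R_def using \<open>\<delta> > 0\<close> by (intro sum.remove) auto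
  have sum_cong: "[F \<delta> + (\<Sum>d\<in>R. F d) = G \<delta> + (\<Sum>d\<in>R. G d)] (mod M)"
    using sums[OF less.prems] by (simp only: split)
  have "[(\<Sum>d\<in>R. F d) = (\<Sum>d\<in>R. G d)] (mod M)"
  proof (rule cong_sum)
    fix d assume "d \<in> R"
    then have "d dvd \<delta>" "d < \<delta>"
      using \<open>\<delta> > 0\<close> by (auto simp: R_def dest: dvd_imp_le)
    then show "[F d = G d] (mod M)"
      using less.IH dvd_trans[OF _ less.prems] by blast
  qed
  then have "[F \<delta> + (\<Sum>d\<in>R. G d) = F \<delta> + (\<Sum>d\<in>R. F d)] (mod M)"
    by (rule cong_add[OF cong_refl cong_sym])
  from this sum_cong have "[F \<delta> + (\<Sum>d\<in>R. G d) = G \<delta> + (\<Sum>d\<in>R. G d)] (mod M)"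
    by (rule cong_trans)
  then show ?case
    by (simp only: cong_add_rcancel)
qed

section \<open>Roots of unity modulo m\<close>

definition roots_of_unity :: "nat \<Rightarrow> nat \<Rightarrow> nat set" where
  "roots_of_unity m n = {a \<in> totatives m. [a ^ n = 1] (mod m)}"

lemma sum_roots_of_unity_eq_sum_ind_sum:
  assumes "n > 0"
  shows "(\<Sum>a\<in>roots_of_unity m n. int a) = (\<Sum>d | d dvd n. ind_sum m d)"
proof -
  have "ind_sum m d = (\<Sum>a\<in>{a \<in> roots_of_unity m n. ord m a = d}. int a)" if "d dvd n" for d
  proof -
    have "{a \<in> totatives m. ord m a = d} = {a \<in> roots_of_unity m n. ord m a = d}"
      using that by (auto simp: roots_of_unity_def ord_divides')
    then show ?thesis
      by (simp add: ind_sum_def)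
  qed
  then have "(\<Sum>d | d dvd n. ind_sum m d) = (\<Sum>d | d dvd n. \<Sum>a\<in>{a \<in> roots_of_unity m n. ord m a = d}. int a)"
    by simp
  also have "\<dots> = (\<Sum>a\<in>roots_of_unity m n. int a)"
    using assms by (intro sum.group) (auto simp: roots_of_unity_def ord_divides')
  finally show ?thesis ..
qed

lemma card_roots_of_unity_le:
  fixes m g n :: nat
  assumes "m > 1" and g: "residue_primroot m g" and n: "n dvd totient m" "n > 0"
  shows "card (roots_of_unity m n) \<le> n"
proof -
  from n(1) obtain c where c: "totient m = n * c"
    by (rule dvdE)
  have "roots_of_unity m n \<subseteq> (\<lambda>l. g ^ (c * l) mod m) ` {..<n}"
  proof
    fix a assume a: "a \<in> roots_of_unity m n"
    then obtain i where i: "i < totient m" "a = g ^ i mod m"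
      using residue_primroot_is_generator[OF assms(1) g]
      by (auto simp: roots_of_unity_def bij_betw_def)
    have "[(g ^ i) ^ n = 1] (mod m)"
      using a i(2) by (simp add: roots_of_unity_def cong_def power_mod)
    then have "n * c dvd n * i"
      using g c by (simp add: residue_primroot_def ord_divides' mult.commute flip: power_mult)
    then have "c dvd i"
      using n(2) by simp
    then obtain l where "i = c * l"
      by (rule dvdE)
    moreover from this have "l < n"
      using i(1) c by (simp add: mult.commute[of n])
    ultimately show "a \<in> (\<lambda>l. g ^ (c * l) mod m) ` {..<n}"
      using i(2) by auto
  qed
  then have "card (roots_of_unity m n) \<le> card ((\<lambda>l. g ^ (c * l) mod m) ` {..<n})"
    by (intro card_mono) simp_all
  also have "\<dots> \<le> n"
    using card_image_le[of "{..<n}"] by simp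
  finally show ?thesis .
qed

lemma cong_1_pow_mult_modulus:
  fixes y n p :: nat
  assumes y: "[y = 1] (mod n)" and "p dvd n"
  shows "[y ^ p = 1] (mod n * p)"
proof -
  have y_int: "[int y = 1] (mod int n)"
    using y by (simp flip: cong_int_iff)
  then have "[int y = 1] (mod int p)"
    by (rule cong_dvd_modulus) (simp add: assms(2))
  then have "[(\<Sum>i<p. int y ^ i) = (\<Sum>i<p. 1)] (mod int p)"
    by (intro cong_sum) (metis cong_pow power_one)
  also have "(\<Sum>i<p. 1) = int p"
    by simp
  also have "[int p = 0] (mod int p)"
    by (simp add: cong_0_iff)
  finally have "int n * int p dvd (int y - 1) * (\<Sum>i<p. int y ^ i)"
    using y_int by (intro mult_dvd_mono) (simp_all add: cong_iff_dvd_diff cong_0_iff)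
  then have "[int (y ^ p) = int 1] (mod int (n * p))"
    by (simp add: cong_iff_dvd_diff power_diff_1_eq)
  then show ?thesis
    by (simp only: cong_int_iff)
qed

lemma cong_1_pow_power_modulus:
  fixes x p i k :: nat
  assumes "[x = 1] (mod p ^ i)" and "i \<ge> 1"
  shows "[x ^ p ^ k = 1] (mod p ^ (i + k))"
proof (induction k)
  case 0
  then show ?case
    using assms(1) by simp
next
  case (Suc k)
  have "p dvd p ^ (i + k)"
    using assms(2) by (simp add: dvd_power)
  with Suc.IH have "[x ^ (p ^ k * p) = 1] (mod p ^ (i + k) * p)"
    unfolding power_mult by (rule cong_1_pow_mult_modulus)
  then show ?case
    by (simp only: power_Suc2 add_Suc_right)
qed

lemma roots_of_unity_prime_power:
  fixes p \<alpha> j g :: nat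
  assumes p: "prime p" and "j < \<alpha>" and g: "residue_primroot (p ^ \<alpha>) g"
  shows "roots_of_unity (p ^ \<alpha>) (p ^ j) = (\<lambda>t. 1 + t * p ^ (\<alpha> - j)) ` {..<p ^ j}"
proof -
  let ?m = "p ^ \<alpha>" and ?q = "p ^ (\<alpha> - j)"
  have "p > 1"
    using p by (rule prime_gt_1_nat)
  have mq: "p ^ j * ?q = ?m"
    using \<open>j < \<alpha>\<close> by (simp flip: power_add)
  have inj: "inj_on (\<lambda>t. 1 + t * ?q) {..<p ^ j}"
    using \<open>p > 1\<close> by (auto simp: inj_on_def)
  have "(\<lambda>t. 1 + t * ?q) ` {..<p ^ j} \<subseteq> roots_of_unity ?m (p ^ j)"
  proof safe
    fix t assume "t < p ^ j"
    have "1 + t * ?q \<le> (t + 1) * ?q"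
      using \<open>p > 1\<close> by simp
    also have "\<dots> \<le> p ^ j * ?q"
      using \<open>t < p ^ j\<close> by (intro mult_right_mono) auto
    finally have "1 + t * ?q \<le> ?m"
      by (simp only: mq)
    have cong_q: "[1 + t * ?q = 1] (mod ?q)"
      by (simp only: cong_def mod_mult_self1)
    have "p dvd ?q"
      using \<open>j < \<alpha>\<close> by (simp add: dvd_power)
    with cong_q have "[1 + t * ?q = 1] (mod p)"
      by (rule cong_dvd_modulus_nat)
    then have "coprime (1 + t * ?q) p"
      by (rule cong_imp_coprime[OF cong_sym]) simp
    then have "coprime (1 + t * ?q) ?m"
      by simp
    moreover have "[(1 + t * ?q) ^ p ^ j = 1] (mod ?m)"
      using cong_1_pow_power_modulus[OF cong_q, of j] \<open>j < \<alpha>\<close> by simp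
    ultimately show "1 + t * ?q \<in> roots_of_unity ?m (p ^ j)"
      using \<open>1 + t * ?q \<le> ?m\<close> by (simp add: roots_of_unity_def in_totatives_iff)
  qed
  moreover have "card (roots_of_unity ?m (p ^ j)) \<le> card ((\<lambda>t. 1 + t * ?q) ` {..<p ^ j})"
  proof -
    have "p ^ j dvd p ^ (\<alpha> - 1) * (p - 1)"
      using \<open>j < \<alpha>\<close> by (simp add: le_imp_power_dvd)
    then have "p ^ j dvd totient ?m"
      using p \<open>j < \<alpha>\<close> by (simp add: totient_prime_power)
    moreover have "?m > 1"
      using \<open>p > 1\<close> \<open>j < \<alpha>\<close> by (intro one_less_power) auto
    ultimately show ?thesis
      using card_roots_of_unity_le[OF _ g] \<open>p > 1\<close> card_image[OF inj] by simp
  qed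
  ultimately show ?thesis
    by (intro card_seteq[symmetric]) (simp_all add: roots_of_unity_def)
qed

lemma sum_roots_of_unity_prime_power:
  fixes p \<alpha> j g :: nat
  assumes p: "prime p" "odd p" and "j < \<alpha>" and g: "residue_primroot (p ^ \<alpha>) g"
  shows "[(\<Sum>a\<in>roots_of_unity (p ^ \<alpha>) (p ^ j). int a) = int (p ^ j)] (mod int (p ^ \<alpha>))"
proof -
  let ?N = "p ^ j" and ?q = "p ^ (\<alpha> - j)"
  have inj: "inj_on (\<lambda>t. 1 + t * ?q) {..<?N}"
    using p(1) by (auto simp: inj_on_def prime_gt_0_nat)
  have "odd ?N"
    using p(2) by simp
  then obtain r where r: "?N = 2 * r + 1"
    by (rule oddE)
  have "(\<Sum>t<?N. t) = (\<Sum>t\<le>2 * r. t)"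
    by (simp add: r lessThan_Suc_atMost)
  also have "\<dots> = r * ?N"
    using gauss_sum_nat[of "2 * r"] by (simp add: atLeast0AtMost r)
  finally have gauss: "(\<Sum>t<?N. t) = r * ?N" .
  have "(\<Sum>a\<in>roots_of_unity (p ^ \<alpha>) ?N. a) = (\<Sum>t<?N. 1 + t * ?q)"
    unfolding roots_of_unity_prime_power[OF p(1) \<open>j < \<alpha>\<close> g]
    by (rule sum.reindex[OF inj, unfolded comp_def])
  also have "\<dots> = ?N + (\<Sum>t<?N. t) * ?q"
    by (simp only: sum.distrib sum_distrib_right) simp
  also have "\<dots> = ?N + r * p ^ \<alpha>"
    using \<open>j < \<alpha>\<close> by (simp add: gauss mult.assoc flip: power_add)
  finally have "[(\<Sum>a\<in>roots_of_unity (p ^ \<alpha>) ?N. a) = ?N] (mod p ^ \<alpha>)"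
    by (simp add: cong_def)
  then show ?thesis
    unfolding of_nat_sum[symmetric] by (simp only: cong_int_iff)
qed

lemma sum_cong_0_if_mult_stable:
  fixes m h :: nat and A :: "nat set"
  assumes "m > 1" and A: "A \<subseteq> totatives m" and "coprime h m"
    and unit: "coprime (int h - 1) (int m)"
    and stable: "\<And>a. a \<in> A \<Longrightarrow> h * a mod m \<in> A"
  shows "[(\<Sum>a\<in>A. int a) = 0] (mod int m)"
proof -
  define \<pi> where "\<pi> a = h * a mod m" for a
  have "finite A"
    using A by (rule finite_subset) simp
  have "inj_on \<pi> A"
  proof (rule inj_onI)
    fix a b assume ab: "a \<in> A" "b \<in> A" "\<pi> a = \<pi> b"
    then have "[a = b] (mod m)"
      using cong_mult_lcancel_nat[OF \<open>coprime h m\<close>] by (simp add: \<pi>_def cong_def)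
    moreover have "a < m" "b < m"
      using ab A totatives_less \<open>m > 1\<close> by auto
    ultimately show "a = b"
      by (rule cong_less_modulus_unique_nat)
  qed
  moreover have "\<pi> ` A \<subseteq> A"
    using stable by (auto simp: \<pi>_def)
  ultimately have "\<pi> ` A = A"
    using \<open>finite A\<close> by (intro endo_inj_surj)
  then have "(\<Sum>a\<in>A. int a) = (\<Sum>a\<in>A. int (\<pi> a))"
    using sum.reindex[OF \<open>inj_on \<pi> A\<close>, of int] by simp
  also have "[\<dots> = (\<Sum>a\<in>A. int h * int a)] (mod int m)"
    by (intro cong_sum) (simp add: \<pi>_def cong_def of_nat_mod)
  also have "(\<Sum>a\<in>A. int h * int a) = int h * (\<Sum>a\<in>A. int a)"
    by (simp add: sum_distrib_left)
  finally have "[(int h - 1) * (\<Sum>a\<in>A. int a) = (int h - 1) * 0] (mod int m)"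
    by (simp add: cong_iff_dvd_diff algebra_simps dvd_diff_commute)
  then show ?thesis
    by (simp only: cong_mult_lcancel[OF unit])
qed

lemma mult_mod_in_roots_of_unity:
  fixes m n h a :: nat
  assumes "m > 1" and "coprime h m" and "[h ^ n = 1] (mod m)" and a: "a \<in> roots_of_unity m n"
  shows "h * a mod m \<in> roots_of_unity m n"
proof -
  have "coprime a m" and a_pow: "[a ^ n = 1] (mod m)"
    using a by (auto simp: roots_of_unity_def in_totatives_iff)
  with \<open>coprime h m\<close> \<open>m > 1\<close> have coprime: "coprime (h * a mod m) m"
    by simp
  then have "h * a mod m \<noteq> 0"
    using \<open>m > 1\<close> by (intro notI) simp
  moreover have "h * a mod m \<le> m"
    using \<open>m > 1\<close> by (simp add: less_imp_le)
  moreover have "[(h * a mod m) ^ n = 1] (mod m)"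
  proof -
    have "[(h * a mod m) ^ n = h ^ n * a ^ n] (mod m)"
      by (simp add: cong_def power_mod power_mult_distrib)
    also have "[h ^ n * a ^ n = 1 * 1] (mod m)"
      using assms(3) a_pow by (rule cong_mult)
    finally show ?thesis
      by simp
  qed
  ultimately show ?thesis
    using coprime by (simp add: roots_of_unity_def in_totatives_iff)
qed

lemma sum_roots_of_unity_cong_0:
  fixes p \<alpha> n q g :: nat
  assumes p: "prime p" and "\<alpha> > 0" and g: "residue_primroot (p ^ \<alpha>) g"
    and n: "n dvd totient (p ^ \<alpha>)" and q: "prime q" "q dvd n" "q \<noteq> p"
  shows "[(\<Sum>a\<in>roots_of_unity (p ^ \<alpha>) n. int a) = 0] (mod int (p ^ \<alpha>))"
proof -
  let ?m = "p ^ \<alpha>"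
  have "?m > 1"
    using prime_gt_1_nat[OF p] \<open>\<alpha> > 0\<close> by (intro one_less_power) auto
  have ord_g: "ord ?m g = totient ?m" and "coprime ?m g"
    using g by (auto simp: residue_primroot_def)
  from dvd_trans[OF q(2) n] obtain c where c: "totient ?m = q * c"
    by (rule dvdE)
  define h where "h = g ^ c"
  have "coprime h ?m"
    using \<open>coprime ?m g\<close> by (auto simp: h_def coprime_commute)
  have h_pow: "[h ^ n = 1] (mod ?m)"
  proof -
    from q(2) obtain n' where "n = q * n'"
      by (rule dvdE)
    then have "h ^ n = g ^ (totient ?m * n')"
      by (simp add: h_def c ac_simps flip: power_mult)
    then show ?thesis
      by (simp add: ord_divides' ord_g)
  qed
  have "\<not> [h = 1] (mod p)"
  proof
    assume "[h = 1] (mod p)"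
    then have "[h ^ p ^ (\<alpha> - 1) = 1] (mod p ^ (1 + (\<alpha> - 1)))"
      by (intro cong_1_pow_power_modulus) simp_all
    then have "[g ^ (c * p ^ (\<alpha> - 1)) = 1] (mod ?m)"
      using \<open>\<alpha> > 0\<close> by (simp add: h_def power_mult)
    then have "q * c dvd c * p ^ (\<alpha> - 1)"
      by (simp add: ord_divides' ord_g c)
    moreover have "c > 0"
      using c totient_gt_0_iff[of ?m] prime_gt_0_nat[OF p] by (auto intro!: gr0I)
    ultimately have "q dvd p ^ (\<alpha> - 1)"
      by (simp add: mult.commute)
    with q(1) have "q dvd p"
      by (rule prime_dvd_power)
    with q p show False
      by (simp add: primes_dvd_imp_eq)
  qed
  have "coprime (int h - 1) (int ?m)"
  proof -
    have "\<not> int p dvd int h - 1"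
      using \<open>\<not> [h = 1] (mod p)\<close> by (simp add: cong_iff_dvd_diff flip: cong_int_iff)
    then have "coprime (int h - 1) (int p)"
      using p by (simp add: prime_imp_coprime coprime_commute)
    then show ?thesis
      by simp
  qed
  moreover have "roots_of_unity ?m n \<subseteq> totatives ?m"
    by (auto simp: roots_of_unity_def)
  moreover note mult_mod_in_roots_of_unity[OF \<open>?m > 1\<close> \<open>coprime h ?m\<close> h_pow]
  ultimately show ?thesis
    using sum_cong_0_if_mult_stable[OF \<open>?m > 1\<close> _ \<open>coprime h ?m\<close>] by blast
qed

lemma sum_roots_of_unity_odd_prime_power:
  fixes p \<alpha> n :: nat
  assumes p: "prime p" "odd p" and "\<alpha> > 0" and n: "n dvd totient (p ^ \<alpha>)"
  shows "[(\<Sum>a\<in>roots_of_unity (p ^ \<alpha>) n. int a) = (if \<exists>j. n = p ^ j then int n else 0)]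
           (mod int (p ^ \<alpha>))"
proof -
  obtain g where "\<forall>k>0. residue_primroot (p ^ k) g"
    using residue_primroot_odd_prime_power_exists[OF p] by blast
  with \<open>\<alpha> > 0\<close> have g: "residue_primroot (p ^ \<alpha>) g"
    by blast
  have totient: "totient (p ^ \<alpha>) = p ^ (\<alpha> - 1) * (p - 1)"
    using p(1) \<open>\<alpha> > 0\<close> by (rule totient_prime_power)
  show ?thesis
  proof (cases "\<exists>j. n = p ^ j")
    case True
    then obtain j where j: "n = p ^ j" ..
    have "coprime p (p - 1)"
      using prime_gt_0_nat[OF p(1)] by (rule coprime_diff_one_right_nat)
    then have "coprime (p ^ j) (p - 1)"
      by simp
    moreover have "p ^ j dvd p ^ (\<alpha> - 1) * (p - 1)"
      using n j totient by simp
    ultimately have "p ^ j dvd p ^ (\<alpha> - 1)"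
      by (simp add: coprime_dvd_mult_left_iff)
    then have "j \<le> \<alpha> - 1"
      using prime_gt_1_nat[OF p(1)] by (rule power_dvd_imp_le)
    then have "j < \<alpha>"
      using \<open>\<alpha> > 0\<close> by simp
    then show ?thesis
      using sum_roots_of_unity_prime_power[OF p _ g] j True by simp
  next
    case False
    have "totient (p ^ \<alpha>) > 0"
      using p(1) by (simp add: prime_gt_0_nat)
    from this n have "n > 0"
      by (rule dvd_pos_nat)
    define v where "v = multiplicity p n"
    obtain e where ne: "n = p ^ v * e" and e: "\<not> p dvd e"
      using multiplicity_decompose'[of n p] \<open>n > 0\<close> p(1) unfolding v_def by (metis not_prime_unit neq0_conv)
    have "e \<noteq> 1"
      using False ne by auto
    then obtain q where q: "prime q" "q dvd e"
      using prime_factor_nat by blast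
    moreover have "q dvd n"
      using q(2) ne by simp
    moreover have "q \<noteq> p"
      using q(2) e by auto
    ultimately show ?thesis
      using sum_roots_of_unity_cong_0[OF p(1) \<open>\<alpha> > 0\<close> g n] False by simp
  qed
qed

section \<open>The closed formula for odd prime powers\<close>

definition ind_sum_formula :: "nat \<Rightarrow> nat \<Rightarrow> int" where
  "ind_sum_formula p d = moebius_mu (gcd d (p - 1)) * int (totient (p ^ multiplicity p d))"

lemma sum_divisors_ind_sum_formula:
  fixes p n k :: nat
  assumes p: "prime p" and "n > 0" and n_dvd: "n dvd p ^ k * (p - 1)"
  shows "(\<Sum>d | d dvd n. ind_sum_formula p d) = (if \<exists>j. n = p ^ j then int n else 0)"
proof -
  define v where "v = multiplicity p n"
  obtain e where n: "n = p ^ v * e" and e: "\<not> p dvd e"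
    using multiplicity_decompose'[of n p] assms(2) p unfolding v_def by (metis not_prime_unit neq0_conv)
  have "e > 0"
    using e by (auto intro!: gr0I)
  have "e dvd p ^ k * (p - 1)"
    using dvd_trans[OF _ n_dvd, of e] n by simp
  moreover have "coprime e (p ^ k)"
    using prime_imp_coprime[OF p e] by (simp add: coprime_commute)
  ultimately have "e dvd p - 1"
    by (simp add: coprime_dvd_mult_right_iff)
  have "coprime (p - 1) p"
    using prime_gt_0_nat[OF p] by (rule coprime_diff_one_left_nat)
  have summand: "ind_sum_formula p (p ^ i * d) = int (totient (p ^ i)) * moebius_mu d" if "d dvd e" for i d
  proof -
    have "gcd (p ^ i * d) (p - 1) = gcd d (p - 1)"
      using \<open>coprime (p - 1) p\<close> by (intro gcd_mult_left_left_cancel) simp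
    also have "\<dots> = d"
      using dvd_trans[OF that \<open>e dvd p - 1\<close>] by (simp add: gcd_nat.absorb1)
    finally have "gcd (p ^ i * d) (p - 1) = d" .
    moreover have "multiplicity p (p ^ i * d) = i"
    proof (rule multiplicity_decomposeI[OF refl])
      show "\<not> p dvd d"
        using e that dvd_trans by blast
    qed (use p in auto)
    ultimately show ?thesis
      by (simp add: ind_sum_formula_def)
  qed
  have "(\<Sum>d | d dvd n. ind_sum_formula p d) = (\<Sum>i\<le>v. \<Sum>d | d dvd e. int (totient (p ^ i)) * moebius_mu d)"
    unfolding n sum_divisors_prime_power_mult[OF p e] by (simp add: summand)
  also have "\<dots> = int (\<Sum>i\<le>v. totient (p ^ i)) * (\<Sum>d | d dvd e. moebius_mu d)"
    by (simp add: sum_product)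
  also have "\<dots> = int (p ^ v) * (if e = 1 then 1 else 0)"
    using p \<open>e > 0\<close> by (simp add: sum_totient_prime_powers sum_moebius_mu_divisors)
  also have "\<dots> = (if \<exists>j. n = p ^ j then int n else 0)"
  proof -
    have "e = 1" if "n = p ^ j" for j
    proof -
      have "v = j"
        using p that by (simp add: v_def multiplicity_prime_power)
      with n that have "p ^ j * e = p ^ j * 1"
        by (metis mult.right_neutral)
      then show ?thesis
        using prime_gt_0_nat[OF p] by simp
    qed
    moreover have "\<exists>j. n = p ^ j" if "e = 1"
      using n that by auto
    ultimately show ?thesis
      using n by (cases "e = 1") auto
  qed
  finally show ?thesis .
qed

lemma ind_sum_odd_prime_power_cong:
  fixes p \<alpha> \<delta> :: nat
  assumes p: "prime p" "odd p" and "\<alpha> > 0" and "\<delta> dvd totient (p ^ \<alpha>)"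
  shows "[ind_sum (p ^ \<alpha>) \<delta> = ind_sum_formula p \<delta>] (mod int (p ^ \<alpha>))"
proof (rule cong_of_divisor_sums_cong[OF _ _ assms(4)])
  show totient_pos: "totient (p ^ \<alpha>) > 0"
    using p(1) by (simp add: prime_gt_0_nat)
  fix n assume n: "n dvd totient (p ^ \<alpha>)"
  with totient_pos have "n > 0"
    by (rule dvd_pos_nat)
  have "n dvd p ^ (\<alpha> - 1) * (p - 1)"
    using n totient_prime_power[OF p(1) \<open>\<alpha> > 0\<close>] by simp
  then show "[(\<Sum>d | d dvd n. ind_sum (p ^ \<alpha>) d) = (\<Sum>d | d dvd n. ind_sum_formula p d)] (mod int (p ^ \<alpha>))"
    using sum_roots_of_unity_odd_prime_power[OF p \<open>\<alpha> > 0\<close> n]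
      sum_roots_of_unity_eq_sum_ind_sum[OF \<open>n > 0\<close>] sum_divisors_ind_sum_formula[OF p(1) \<open>n > 0\<close>]
    by simp
qed

theorem theorem1p8:
  shows
   "(\<forall>\<delta>::nat. \<delta> > 0 \<and> \<delta> dvd Carmichael 2 \<longrightarrow> [ind_sum 2 \<delta> = 1] (mod 2))
  \<and> (\<forall>\<delta>::nat. \<delta> > 0 \<and> \<delta> dvd Carmichael 4 \<longrightarrow> [ind_sum 4 \<delta> = (-1) ^ (\<delta> + 1)] (mod 4))
  \<and> (\<forall>\<delta>::nat. \<delta> > 0 \<and> \<delta> dvd Carmichael 8 \<longrightarrow> [ind_sum 8 \<delta> = (-1) ^ (\<delta> + 1)] (mod 8))
  \<and> (\<forall>\<alpha> \<beta> :: nat. \<alpha> > 3 \<and> 1 < \<beta> \<and> \<beta> \<le> \<alpha> - 2 \<longrightarrow>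
        [ind_sum (2 ^ \<alpha>) (2 ^ \<beta>) = 0] (mod 2 ^ \<alpha>))
  \<and> (\<forall>(p::nat) (\<alpha>::nat) (\<delta>::nat). prime p \<and> odd p \<and> \<alpha> > 0 \<and> \<delta> > 0 \<and> \<delta> dvd Carmichael (p ^ \<alpha>) \<longrightarrow>
        [ind_sum (p ^ \<alpha>) \<delta> = moebius_mu (gcd \<delta> (p - 1)) * int (totient (p ^ multiplicity p \<delta>))] (mod int (p ^ \<alpha>)))"
proof (intro conjI allI impI)
  fix \<delta> :: nat
  assume "\<delta> > 0 \<and> \<delta> dvd Carmichael 2"
  then show "[ind_sum 2 \<delta> = 1] (mod 2)"
    using ind_sum_2_1 by simp
next
  fix \<delta> :: nat
  assume "\<delta> > 0 \<and> \<delta> dvd Carmichael 4"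
  then have "\<delta> = 1 \<or> \<delta> = 2"
    using two_is_prime_nat prime_nat_iff by simp
  then show "[ind_sum 4 \<delta> = (-1) ^ (\<delta> + 1)] (mod 4)"
    using ind_sum_4_1 ind_sum_4_2 by (auto simp: cong_def)
next
  fix \<delta> :: nat
  assume "\<delta> > 0 \<and> \<delta> dvd Carmichael 8"
  then have "\<delta> = 1 \<or> \<delta> = 2"
    using Carmichael_twopow_ge_8[of 3] two_is_prime_nat prime_nat_iff by simp
  then show "[ind_sum 8 \<delta> = (-1) ^ (\<delta> + 1)] (mod 8)"
    using ind_sum_8_1 ind_sum_8_2 by (auto simp: cong_def)
next
  fix \<alpha> \<beta> :: nat
  assume "\<alpha> > 3 \<and> 1 < \<beta> \<and> \<beta> \<le> \<alpha> - 2"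
  then have "4 dvd (2::nat) ^ \<beta>"
    using le_imp_power_dvd[of 2 \<beta> "2::nat"] by simp
  then show "[ind_sum (2 ^ \<alpha>) (2 ^ \<beta>) = 0] (mod 2 ^ \<alpha>)"
    using ind_sum_cong_0_if_4_dvd[of "2 ^ \<beta>" "2 ^ \<alpha>"] by simp
next
  fix p \<alpha> \<delta> :: nat
  assume "prime p \<and> odd p \<and> \<alpha> > 0 \<and> \<delta> > 0 \<and> \<delta> dvd Carmichael (p ^ \<alpha>)"
  then have p: "prime p" "odd p" and "\<alpha> > 0" and "\<delta> dvd totient (p ^ \<alpha>)"
    by (auto simp: Carmichael_odd_prime_power totient_prime_power)
  then show "[ind_sum (p ^ \<alpha>) \<delta> = moebius_mu (gcd \<delta> (p - 1)) * int (totient (p ^ multiplicity p \<delta>))]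
      (mod int (p ^ \<alpha>))"
    using ind_sum_odd_prime_power_cong[OF p \<open>\<alpha> > 0\<close>] by (simp add: ind_sum_formula_def)
qed

end
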